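(* Let $N\ge 5$ and $2\le d\le N-2$. Consider the conditions (C1)–(C7) below on $\lambda\in\mathbb{R}^{d\times(N+1)}$ (rows $1\le i\le d$, columns $0\le n\le N$): (C1) $\lambda_{i,n}=0$ whenever $i>n$; (C2) $\lambda_{i,n}=N$ whenever $i<n+d-N+1$; (C3) $\sum_{i=1}^d\lambda_{i,n}=dn$ for $0<n<N$; (C4) $\lambda_{i,n}\le\lambda_{i,n+1}$ for $1\le i\le d$, $i\le n<N-d+i-1$; (C5) $\lambda_{i,n}\le\lambda_{i-1,n-1}$ for $1<i\le d$, $i\le n<N-d+i$; (C6) $\lambda_{d,d}\ge0$; (C7) $\lambda_{1,N-d}\le N$. Let $I$ be any one of the inequalities in (C4)–(C7) other than $\lambda_{2,2}\le\lambda_{1,1}$, $\lambda_{1,1}\le\lambda_{1,2}$, $\lambda_{d,N-2}\le\lambda_{d,N-1}$ and $\lambda_{d,N-1}\le\lambda_{d-1,N-2}$. Then there exists $\lambda\in\mathbb{R}^{d\times(N+1)}$ satisfying all of (C1)–(C7) except $I$, and violating $I$.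
   Context: All entries are real; the conditions (C1)–(C7) characterize the polytope $\Lambda_{N,d}$ of eigensteps of equal norm tight frames (squared norms $d$, frame operator $N I_d$). *)

theory Defs
  imports Main "HOL.Real"
begin

text \<open>A matrix lambda in R^{d x (N+1)} is represented as a function
  nat => nat => real; only entries with 1 <= i <= d and 0 <= n <= N matter.\<close>

datatype ineq = C4 nat nat | C5 nat nat | C6 | C7

text \<open>Which inequalities belong to (C4)-(C7) (index ranges, all in nat,
  subtraction-free where possible).\<close>
fun is_ineq :: "nat \<Rightarrow> nat \<Rightarrow> ineq \<Rightarrow> bool" where
  "is_ineq N d (C4 i n) = (1 \<le> i \<and> i \<le> d \<and> i \<le> n \<and> n + 1 < N - d + i)"
| "is_ineq N d (C5 i n) = (1 < i \<and> i \<le> d \<and> i \<le> n \<and> n < N - d + i)"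
| "is_ineq N d C6 = True"
| "is_ineq N d C7 = True"

fun holds :: "nat \<Rightarrow> nat \<Rightarrow> (nat \<Rightarrow> nat \<Rightarrow> real) \<Rightarrow> ineq \<Rightarrow> bool" where
  "holds N d lam (C4 i n) = (lam i n \<le> lam i (n + 1))"
| "holds N d lam (C5 i n) = (lam i n \<le> lam (i - 1) (n - 1))"
| "holds N d lam C6 = (lam d d \<ge> 0)"
| "holds N d lam C7 = (lam 1 (N - d) \<le> real N)"

definition C1 :: "nat \<Rightarrow> nat \<Rightarrow> (nat \<Rightarrow> nat \<Rightarrow> real) \<Rightarrow> bool" where
  "C1 N d lam = (\<forall>i n. 1 \<le> i \<and> i \<le> d \<and> n \<le> N \<and> i > n \<longrightarrow> lam i n = 0)"

definition C2 :: "nat \<Rightarrow> nat \<Rightarrow> (nat \<Rightarrow> nat \<Rightarrow> real) \<Rightarrow> bool" where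
  "C2 N d lam = (\<forall>i n. 1 \<le> i \<and> i \<le> d \<and> n \<le> N \<and> i + N < n + d + 1 \<longrightarrow> lam i n = real N)"

definition C3 :: "nat \<Rightarrow> nat \<Rightarrow> (nat \<Rightarrow> nat \<Rightarrow> real) \<Rightarrow> bool" where
  "C3 N d lam = (\<forall>n. 0 < n \<and> n < N \<longrightarrow> (\<Sum>i=1..d. lam i n) = real d * real n)"

end

theory Submission imports Defs begin

text \<open>Write \<open>N = d + M\<close>. The point with \<open>\<lambda>(i, n) = d + 1 + n - 2i\<close> on the free entries
  (those not fixed by (C1), (C2)) satisfies (C1)--(C3) and every inequality of (C4)--(C7)
  with slack exactly 1. Adding a perturbation that is supported on the free entries and has
  zero column sums preserves (C1)--(C3); so it suffices to find, for each admissible \<open>I\<close>, such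
  a perturbation lowering the slack of \<open>I\<close> by more than 1 and of every other inequality by at
  most 1. Small alternating patterns on two adjacent rows and columns do this, with a few
  special patterns when \<open>d = 2\<close> or \<open>M = 2\<close>.\<close>

definition irredundant :: "nat \<Rightarrow> nat \<Rightarrow> ineq \<Rightarrow> bool" where
  "irredundant N d I \<longleftrightarrow> (\<exists>lam. C1 N d lam \<and> C2 N d lam \<and> C3 N d lam
     \<and> (\<forall>J. is_ineq N d J \<and> J \<noteq> I \<longrightarrow> holds N d lam J) \<and> \<not> holds N d lam I)"

definition unit_slack_point :: "nat \<Rightarrow> nat \<Rightarrow> nat \<Rightarrow> nat \<Rightarrow> real" where
  "unit_slack_point N d i n = (if n < i then 0 else if i + N < n + d + 1 then real N
     else real d + 1 + real n - 2 * real i)"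

lemma double_sum_of_nat_Ioc:
  "a \<le> b \<Longrightarrow> 2 * (\<Sum>i\<in>{a<..b}. real i) = real b * (real b + 1) - real a * (real a + 1)"
proof (induction b)
  case (Suc b)
  show ?case
  proof (cases "a = Suc b")
    case False
    then have "a \<le> b" "{a<..Suc b} = insert (Suc b) {a<..b}"
      using Suc.prems by auto
    then show ?thesis
      using Suc.IH by (simp add: algebra_simps)
  qed simp
qed simp

lemma sum_unit_slack_point_column:
  assumes "0 < n" "n < d + M"
  shows "(\<Sum>i=1..d. unit_slack_point (d + M) d i n) = real d * real n"
proof -
  define a where "a = n - M"
  define b where "b = min d n"
  have ab: "a \<le> b" "b \<le> d"
    using assms unfolding a_def b_def by auto
  have "(\<Sum>i\<in>{1..a}. unit_slack_point (d + M) d i n) = (\<Sum>i\<in>{1..a}. real (d + M))"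
    by (rule sum.cong) (auto simp: unit_slack_point_def a_def)
  then have full: "(\<Sum>i\<in>{1..a}. unit_slack_point (d + M) d i n) = real a * real (d + M)"
    by simp
  have "(\<Sum>i\<in>{a<..b}. unit_slack_point (d + M) d i n)
      = (\<Sum>i\<in>{a<..b}. (real d + 1 + real n) - 2 * real i)"
    by (rule sum.cong) (auto simp: unit_slack_point_def a_def b_def)
  also have "\<dots> = real (b - a) * (real d + 1 + real n)
      - (real b * (real b + 1) - real a * (real a + 1))"
    using double_sum_of_nat_Ioc[OF ab(1)] by (simp add: sum_subtractf sum_distrib_left[symmetric])
  finally have free: "(\<Sum>i\<in>{a<..b}. unit_slack_point (d + M) d i n) = \<dots>" .
  have zero: "(\<Sum>i\<in>{b<..d}. unit_slack_point (d + M) d i n) = 0"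
    by (rule sum.neutral) (auto simp: unit_slack_point_def b_def)
  have split: "{1..d} = {1..a} \<union> {a<..b} \<union> {b<..d}"
    using ab by auto
  have "(\<Sum>i=1..d. unit_slack_point (d + M) d i n)
      = (\<Sum>i\<in>{1..a}. unit_slack_point (d + M) d i n)
      + (\<Sum>i\<in>{a<..b}. unit_slack_point (d + M) d i n)
      + (\<Sum>i\<in>{b<..d}. unit_slack_point (d + M) d i n)"
    unfolding split using ab by (subst sum.union_disjoint, auto)+
  also have "\<dots> = real d * real n"
    unfolding full free zero using assms unfolding a_def b_def
    by (cases "n \<le> M"; cases "n \<le> d") (auto simp: of_nat_diff algebra_simps min_def)
  finally show ?thesis .
qed

definition perturbation :: "(nat \<times> nat \<times> real) list \<Rightarrow> nat \<Rightarrow> nat \<Rightarrow> real" where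
  "perturbation L i n = (\<Sum>(a, b, c)\<leftarrow>L. if i = a \<and> n = b then c else 0)"

lemma perturbation_simps [simp]:
  "perturbation [] i n = 0"
  "perturbation ((a, b, c) # L) i n = (if i = a \<and> n = b then c else 0) + perturbation L i n"
  by (simp_all add: perturbation_def)

lemma perturbation_eq_0:
  "\<forall>(a, b, c)\<in>set L. P a b \<Longrightarrow> \<not> P i n \<Longrightarrow> perturbation L i n = 0"
  by (induction L) auto

lemma sum_perturbation_column:
  "(\<Sum>i=1..d. perturbation L i n) = (\<Sum>(a, b, c)\<leftarrow>L. if 1 \<le> a \<and> a \<le> d \<and> n = b then c else 0)"
proof (induction L)
  case (Cons x L)
  obtain a b c where x: "x = (a, b, c)"
    by (cases x) auto
  have "(\<Sum>i=1..d. if i = a \<and> n = b then c else 0) = (if 1 \<le> a \<and> a \<le> d \<and> n = b then c else 0)"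
    by (cases "n = b") (simp_all add: sum.delta)
  then show ?case
    using Cons by (simp add: x sum.distrib)
qed simp

fun within_unit_slack :: "nat \<Rightarrow> nat \<Rightarrow> (nat \<Rightarrow> nat \<Rightarrow> real) \<Rightarrow> ineq \<Rightarrow> bool" where
  "within_unit_slack M d y (C4 i n) = (-1 \<le> y i (n + 1) - y i n)"
| "within_unit_slack M d y (C5 i n) = (-1 \<le> y (i - 1) (n - 1) - y i n)"
| "within_unit_slack M d y C6 = (-1 \<le> y d d)"
| "within_unit_slack M d y C7 = (y 1 M \<le> 1)"

lemma holds_unit_slack_point_plus_iff:
  assumes "is_ineq (d + M) d J" "2 \<le> M"
  shows "holds (d + M) d (\<lambda>i n. unit_slack_point (d + M) d i n + y i n) J
    \<longleftrightarrow> within_unit_slack M d y J"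
  using assms by (cases J) (auto simp: unit_slack_point_def)

lemma irredundant_by_perturbation:
  assumes slack: "\<And>J. is_ineq (d + M) d J \<Longrightarrow> within_unit_slack M d (perturbation L) J \<longleftrightarrow> J \<noteq> I"
    and "2 \<le> M"
    and support: "\<forall>(a, b, c)\<in>set L. 1 \<le> a \<and> a \<le> d \<and> a \<le> b \<and> b < M + a"
    and column_sums: "\<forall>n. (\<Sum>(a, b, c)\<leftarrow>L. if n = b then c else 0) = 0"
    and I: "is_ineq (d + M) d I"
  shows "irredundant (d + M) d I"
proof -
  define lam where "lam i n = unit_slack_point (d + M) d i n + perturbation L i n" for i n
  have "C1 (d + M) d lam" "C2 (d + M) d lam"
    unfolding C1_def C2_def lam_def
    by (auto simp: unit_slack_point_def perturbation_eq_0[OF support])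
  moreover have "C3 (d + M) d lam"
    unfolding C3_def
  proof (intro allI impI)
    fix n assume n: "0 < n \<and> n < d + M"
    have "(\<Sum>i=1..d. perturbation L i n) = (\<Sum>(a, b, c)\<leftarrow>L. if n = b then c else 0)"
      unfolding sum_perturbation_column using support by (induction L) auto
    then have "(\<Sum>i=1..d. perturbation L i n) = 0"
      using column_sums by simp
    then show "(\<Sum>i=1..d. lam i n) = real d * real n"
      using sum_unit_slack_point_column[of n d M] n by (simp add: lam_def sum.distrib)
  qed
  moreover have "holds (d + M) d lam J \<longleftrightarrow> J \<noteq> I" if "is_ineq (d + M) d J" for J
    using slack[OF that] holds_unit_slack_point_plus_iff[OF that \<open>2 \<le> M\<close>] unfolding lam_def by blast
  ultimately show ?thesis
    unfolding irredundant_def using I by blast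
qed

lemma irredundant_C4_first_row:
  assumes "2 \<le> d" "2 \<le> n" "n < M"
  shows "irredundant (d + M) d (C4 1 n)"
  by (rule irredundant_by_perturbation[where L = "[(1, n, 1), (1, n + 1, -1), (2, n, -1), (2, n + 1, 1)]"], case_tac J)
    (use assms in auto)

lemma irredundant_C4_last_row:
  assumes "2 \<le> M" "2 \<le> d" "d \<le> n" "n + 3 \<le> d + M"
  shows "irredundant (d + M) d (C4 d n)"
  by (rule irredundant_by_perturbation[where L = "[(d, n, 1), (d, n + 1, -1), (d - 1, n, -1), (d - 1, n + 1, 1)]"], case_tac J)
    (use assms in auto)

lemma irredundant_C4_inner_row:
  assumes "2 \<le> M" "1 < i" "i < d" "i \<le> n" "n + 1 < M + i"
  shows "irredundant (d + M) d (C4 i n)"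
  by (rule irredundant_by_perturbation[where L = "[(i, n, 1), (i, n + 1, -1), (i - 1, n, -1), (i + 1, n + 1, 1)]"], case_tac J)
    (use assms in auto)

lemma irredundant_C5_not_last_row:
  assumes "2 \<le> M" "1 < i" "i < d" "i < n" "n < M + i"
  shows "irredundant (d + M) d (C5 i n)"
  by (rule irredundant_by_perturbation[where L = "[(i, n, 1), (i - 1, n - 1, -1), (i + 1, n, -1), (i, n - 1, 1)]"], case_tac J)
    (use assms in auto)

lemma irredundant_C5_from_third_row:
  assumes "2 \<le> M" "2 < i" "i \<le> d" "i \<le> n" "n + 2 \<le> M + i"
  shows "irredundant (d + M) d (C5 i n)"
  by (rule irredundant_by_perturbation[where L = "[(i, n, 1), (i - 1, n - 1, -1), (i - 1, n, -1), (i - 2, n - 1, 1)]"], case_tac J)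
    (use assms in auto)

lemma irredundant_C5_d_eq_2:
  assumes "2 < n" "n \<le> M"
  shows "irredundant (2 + M) 2 (C5 2 n)"
  by (rule irredundant_by_perturbation[where L = "[(2, n, 1), (1, n - 1, -1), (1, n, -1), (2, n - 1, 1)]"], case_tac J)
    (use assms in auto)

lemma irredundant_C6_inner:
  assumes "2 < d" "2 < M"
  shows "irredundant (d + M) d C6"
  by (rule irredundant_by_perturbation[where L = "[(d, d, -2), (d - 1, d, 1), (d - 2, d, 1)]"], case_tac J)
    (use assms in auto)

lemma irredundant_C6_d_eq_2:
  assumes "2 < M"
  shows "irredundant (2 + M) 2 C6"
  by (rule irredundant_by_perturbation[where L = "[(2, 2, -2), (1, 2, 2), (2, 3, -1), (1, 3, 1)]"], case_tac J)
    (use assms in auto)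

lemma irredundant_C6_M_eq_2:
  assumes "2 < d"
  shows "irredundant (d + 2) d C6"
proof -
  \<comment> \<open>In terms of \<open>e\<close> the pattern avoids the truncated subtractions \<open>d - 1\<close>, \<open>d - 2\<close>,
    which the automation of the other cases cannot handle here.\<close>
  define e where "e = d - 3"
  have d: "d = e + 3"
    using assms by (simp add: e_def)
  let ?L = "[(e + 3, e + 3, -2), (e + 2, e + 3, 2), (e + 1, e + 2, 1), (e + 2, e + 2, -1)]"
  have "within_unit_slack 2 (e + 3) (perturbation ?L) J \<longleftrightarrow> J \<noteq> C6"
    if J: "is_ineq (e + 3 + 2) (e + 3) J" for J
  proof (cases J)
    case (C4 i n)
    then have "n = i"
      using J by auto
    then show ?thesis
      using J C4 by auto
  next
    case (C5 i n)
    then obtain i' n' where "i = Suc i'" "n = Suc n'"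
      using J by (cases i; cases n) auto
    then show ?thesis
      using J C5 by auto
  qed auto
  then show ?thesis
    unfolding d by (rule irredundant_by_perturbation) auto
qed

lemma irredundant_C7_inner:
  assumes "2 < d" "2 < M"
  shows "irredundant (d + M) d C7"
  by (rule irredundant_by_perturbation[where L = "[(1, M, 2), (2, M, -1), (3, M, -1)]"], case_tac J)
    (use assms in auto)

lemma irredundant_C7_d_eq_2:
  assumes "2 < M"
  shows "irredundant (2 + M) 2 C7"
  by (rule irredundant_by_perturbation[where L = "[(1, M, 2), (2, M, -2), (1, M - 1, 1), (2, M - 1, -1)]"], case_tac J)
    (use assms in auto)

lemma irredundant_C7_M_eq_2:
  assumes "2 < d"
  shows "irredundant (d + 2) d C7"
  by (rule irredundant_by_perturbation[where L = "[(1, 2, 2), (2, 2, -2), (3, 3, -1), (2, 3, 1)]"], case_tac J)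
    (use assms in auto)

lemma irredundant_C4:
  assumes "2 \<le> M" "2 \<le> d" "is_ineq (d + M) d (C4 i n)"
    and "C4 i n \<noteq> C4 1 1" "C4 i n \<noteq> C4 d (d + M - 2)"
  shows "irredundant (d + M) d (C4 i n)"
proof -
  have "1 \<le> i" "i \<le> d" "i \<le> n" "n + 1 < M + i" "i = 1 \<longrightarrow> n \<noteq> 1" "i = d \<longrightarrow> n + 2 \<noteq> d + M"
    using assms by auto
  then consider "i = 1" "2 \<le> n" "n < M" | "i = d" "d \<le> n" "n + 3 \<le> d + M" | "1 < i" "i < d"
    by fastforce
  then show ?thesis
  proof cases
    case 1
    then show ?thesis
      using irredundant_C4_first_row[of d n M] assms(2) by simp
  next
    case 2
    then show ?thesis
      using irredundant_C4_last_row[of M d n] assms(1,2) by simp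
  qed (use irredundant_C4_inner_row assms(1) \<open>i \<le> n\<close> \<open>n + 1 < M + i\<close> in blast)
qed

lemma irredundant_C5:
  assumes "2 \<le> M" "is_ineq (d + M) d (C5 i n)"
    and "C5 i n \<noteq> C5 2 2" "C5 i n \<noteq> C5 d (d + M - 1)"
  shows "irredundant (d + M) d (C5 i n)"
proof -
  have "1 < i" "i \<le> d" "i \<le> n" "n < M + i" "i = 2 \<longrightarrow> n \<noteq> 2" "i = d \<longrightarrow> n + 1 \<noteq> d + M"
    using assms by auto
  then consider "i < d" "i < n" | "2 < i" "n + 2 \<le> M + i" | "i = 2" "d = 2" "2 < n" "n \<le> M"
    using assms(1) by (cases "i < d \<and> i < n"; cases "2 < i \<and> n + 2 \<le> M + i") auto
  then show ?thesis
  proof cases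
    case 1
    then show ?thesis
      using irredundant_C5_not_last_row assms(1) \<open>1 < i\<close> \<open>n < M + i\<close> by blast
  next
    case 2
    then show ?thesis
      using irredundant_C5_from_third_row assms(1) \<open>i \<le> d\<close> \<open>i \<le> n\<close> by blast
  next
    case 3
    then show ?thesis
      using irredundant_C5_d_eq_2[of n M] by simp
  qed
qed

lemma irredundant_C6:
  assumes "2 \<le> M" "2 \<le> d" "5 \<le> d + M"
  shows "irredundant (d + M) d C6"
  using assms irredundant_C6_inner[of d M] irredundant_C6_d_eq_2[of M] irredundant_C6_M_eq_2[of d]
  by (cases "d = 2"; cases "M = 2") auto

lemma irredundant_C7:
  assumes "2 \<le> M" "2 \<le> d" "5 \<le> d + M"
  shows "irredundant (d + M) d C7"
  using assms irredundant_C7_inner[of d M] irredundant_C7_d_eq_2[of M] irredundant_C7_M_eq_2[of d]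
  by (cases "d = 2"; cases "M = 2") auto

theorem lemma4p3:
  fixes N d :: nat and I :: ineq
  assumes "N \<ge> 5" and "2 \<le> d" and "d \<le> N - 2"
    and "is_ineq N d I"
    and "I \<noteq> C5 2 2" and "I \<noteq> C4 1 1"
    and "I \<noteq> C4 d (N - 2)" and "I \<noteq> C5 d (N - 1)"
  shows "\<exists>lam :: nat \<Rightarrow> nat \<Rightarrow> real.
           C1 N d lam \<and> C2 N d lam \<and> C3 N d lam
         \<and> (\<forall>J. is_ineq N d J \<and> J \<noteq> I \<longrightarrow> holds N d lam J)
         \<and> \<not> holds N d lam I"
proof -
  define M where "M = N - d"
  have N: "N = d + M" and "2 \<le> M" "5 \<le> d + M"
    using assms unfolding M_def by auto
  have "irredundant (d + M) d I"
    using assms \<open>2 \<le> M\<close> \<open>5 \<le> d + M\<close> unfolding N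
    by (cases I) (auto intro: irredundant_C4 irredundant_C5 irredundant_C6 irredundant_C7)
  then show ?thesis
    unfolding irredundant_def N .
qed

end
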